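(* Let $R=R_1\times\dots\times R_w$ be a finite principal ideal ring, with $R_1,\dots,R_w$ finite chain rings, and let $C=C_1\times\dots\times C_w\subseteq R^n\cong R_1^n\times\dots\times R_w^n$ be an $R$-linear code, $C_i=\pi_i(C)$ nonzero. Let $r\ge1$ and suppose that for every $i$ the code $C_i$ has locality $r$, rank $K_i$ over $R_i$, and minimum distance $\mathrm d(C_i)=n-K_i-\lceil K_i/r\rceil+2$ (i.e. $C_i$ meets the LRC bound). Then, with $K$ the rank of $C$ over $R$, $$\mathrm d(C)=n-K-\left\lceil\frac{K}{r}\right\rceil+2 .$$
   Context: The rank of a linear code $D$ over a ring $S$ is the minimum $K$ such that there is an $S$-module monomorphism $D\to S^K$. A coordinate $i$ of a code $D$ has locality $r$ if there is $S_i\subseteq\{1,\dots,n\}\setminus\{i\}$ with $|S_i|\le r$ and $|D_{S_i}|=|D_{S_i\cup\{i\}}|$, where $D_S$ is the code punctured to the coordinates in $S$; $D$ has locality $r$ if every coordinate does. $\mathrm d$ denotes minimum Hamming distance. A finite chain ring is a finite commutative local ring whose ideals are totally ordered by inclusion. *)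

theory Defs
  imports "HOL-Algebra.Ideal" "HOL-Library.FuncSet" Complex_Main
begin

definition finite_chain_ring :: "('a, 'm) ring_scheme \<Rightarrow> bool" where
  "finite_chain_ring S \<longleftrightarrow> cring S \<and> finite (carrier S) \<and>
     (\<exists>!M. maximalideal M S) \<and>
     (\<forall>I J. ideal I S \<longrightarrow> ideal J S \<longrightarrow> I \<subseteq> J \<or> J \<subseteq> I)"

definition prod_ring :: "(nat \<Rightarrow> ('a, 'm) ring_scheme) \<Rightarrow> nat \<Rightarrow> (nat \<Rightarrow> 'a) ring" where
  "prod_ring Rs w =
    \<lparr> carrier = (\<Pi>\<^sub>E i\<in>{0..<w}. carrier (Rs i)),
      mult = (\<lambda>x y. \<lambda>i\<in>{0..<w}. x i \<otimes>\<^bsub>Rs i\<^esub> y i),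
      one = (\<lambda>i\<in>{0..<w}. \<one>\<^bsub>Rs i\<^esub>),
      zero = (\<lambda>i\<in>{0..<w}. \<zero>\<^bsub>Rs i\<^esub>),
      add = (\<lambda>x y. \<lambda>i\<in>{0..<w}. x i \<oplus>\<^bsub>Rs i\<^esub> y i) \<rparr>"

text \<open>S^n: vectors indexed by coordinates {0..<n} (paper: 1..n).\<close>
definition vecs :: "('a, 'm) ring_scheme \<Rightarrow> nat \<Rightarrow> (nat \<Rightarrow> 'a) set" where
  "vecs S n = (\<Pi>\<^sub>E j\<in>{0..<n}. carrier S)"

definition vzero :: "('a, 'm) ring_scheme \<Rightarrow> nat \<Rightarrow> nat \<Rightarrow> 'a" where
  "vzero S n = (\<lambda>j\<in>{0..<n}. \<zero>\<^bsub>S\<^esub>)"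

definition vadd :: "('a, 'm) ring_scheme \<Rightarrow> nat \<Rightarrow> (nat \<Rightarrow> 'a) \<Rightarrow> (nat \<Rightarrow> 'a) \<Rightarrow> nat \<Rightarrow> 'a" where
  "vadd S n x y = (\<lambda>j\<in>{0..<n}. x j \<oplus>\<^bsub>S\<^esub> y j)"

definition vsmult :: "('a, 'm) ring_scheme \<Rightarrow> nat \<Rightarrow> 'a \<Rightarrow> (nat \<Rightarrow> 'a) \<Rightarrow> nat \<Rightarrow> 'a" where
  "vsmult S n s x = (\<lambda>j\<in>{0..<n}. s \<otimes>\<^bsub>S\<^esub> x j)"

definition linear_code :: "('a, 'm) ring_scheme \<Rightarrow> nat \<Rightarrow> (nat \<Rightarrow> 'a) set \<Rightarrow> bool" where
  "linear_code S n D \<longleftrightarrow> D \<subseteq> vecs S n \<and> vzero S n \<in> D \<and>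
     (\<forall>x\<in>D. \<forall>y\<in>D. vadd S n x y \<in> D) \<and>
     (\<forall>s\<in>carrier S. \<forall>x\<in>D. vsmult S n s x \<in> D)"

definition module_mono :: "('a, 'm) ring_scheme \<Rightarrow> nat \<Rightarrow> (nat \<Rightarrow> 'a) set \<Rightarrow> nat
    \<Rightarrow> ((nat \<Rightarrow> 'a) \<Rightarrow> (nat \<Rightarrow> 'a)) \<Rightarrow> bool" where
  "module_mono S n D K f \<longleftrightarrow> f \<in> D \<rightarrow> vecs S K \<and> inj_on f D \<and>
     (\<forall>x\<in>D. \<forall>y\<in>D. f (vadd S n x y) = vadd S K (f x) (f y)) \<and>
     (\<forall>s\<in>carrier S. \<forall>x\<in>D. f (vsmult S n s x) = vsmult S K s (f x))"

definition code_rank :: "('a, 'm) ring_scheme \<Rightarrow> nat \<Rightarrow> (nat \<Rightarrow> 'a) set \<Rightarrow> nat" where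
  "code_rank S n D = (LEAST K. \<exists>f. module_mono S n D K f)"

definition puncture :: "(nat \<Rightarrow> 'a) set \<Rightarrow> nat set \<Rightarrow> (nat \<Rightarrow> 'a) set" where
  "puncture D T = (\<lambda>c. restrict c T) ` D"

definition coord_locality :: "nat \<Rightarrow> (nat \<Rightarrow> 'a) set \<Rightarrow> nat \<Rightarrow> nat \<Rightarrow> bool" where
  "coord_locality n D r i \<longleftrightarrow> (\<exists>T. T \<subseteq> {0..<n} - {i} \<and> card T \<le> r \<and>
       card (puncture D T) = card (puncture D (insert i T)))"

definition has_locality :: "nat \<Rightarrow> (nat \<Rightarrow> 'a) set \<Rightarrow> nat \<Rightarrow> bool" where
  "has_locality n D r \<longleftrightarrow> (\<forall>i\<in>{0..<n}. coord_locality n D r i)"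

definition hamming :: "nat \<Rightarrow> (nat \<Rightarrow> 'a) \<Rightarrow> (nat \<Rightarrow> 'a) \<Rightarrow> nat" where
  "hamming n x y = card {j\<in>{0..<n}. x j \<noteq> y j}"

definition min_dist :: "nat \<Rightarrow> (nat \<Rightarrow> 'a) set \<Rightarrow> nat" where
  "min_dist n D = Min {hamming n x y | x y. x \<in> D \<and> y \<in> D \<and> x \<noteq> y}"

definition proj_code :: "nat \<Rightarrow> nat \<Rightarrow> (nat \<Rightarrow> nat \<Rightarrow> 'a) set \<Rightarrow> (nat \<Rightarrow> 'a) set" where
  "proj_code n i C = (\<lambda>c. \<lambda>j\<in>{0..<n}. c j i) ` C"

end

theory Submission
  imports Defs
begin

text \<open>The rank of C is the largest rank K_i of its components: composing a monomorphism of C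
  with the embedding of the i-th component (multiplication by the idempotent e_i) and the
  projection gives one of C_i, and conversely monomorphisms of the C_i, padded by zeros to a common
  length, assemble componentwise into one of C. Likewise d(C) is the smallest d(C_i): each C_i
  embeds isometrically into C, and two distinct codewords of C differ in some component. Since
  n - K - \<lceil>K/r\<rceil> + 2 is antitone in K, a component of largest rank also has the smallest
  distance, and C inherits its equality in the bound.\<close>

definition proj_vec :: "nat \<Rightarrow> nat \<Rightarrow> (nat \<Rightarrow> nat \<Rightarrow> 'a) \<Rightarrow> nat \<Rightarrow> 'a" where
  "proj_vec m i c = (\<lambda>j\<in>{0..<m}. c j i)"

text \<open>The element of R_1 \<times> ... \<times> R_w with s in slot i and zeros elsewhere; for s = 1 it is the
  idempotent e_i.\<close>
definition prod_single :: "(nat \<Rightarrow> ('a, 'm) ring_scheme) \<Rightarrow> nat \<Rightarrow> nat \<Rightarrow> 'a \<Rightarrow> nat \<Rightarrow> 'a" where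
  "prod_single Rs w i s = (\<lambda>k\<in>{0..<w}. if k = i then s else \<zero>\<^bsub>Rs k\<^esub>)"

definition embed_vec ::
    "(nat \<Rightarrow> ('a, 'm) ring_scheme) \<Rightarrow> nat \<Rightarrow> nat \<Rightarrow> nat \<Rightarrow> (nat \<Rightarrow> 'a) \<Rightarrow> nat \<Rightarrow> nat \<Rightarrow> 'a" where
  "embed_vec Rs w m i a = (\<lambda>j\<in>{0..<m}. prod_single Rs w i (a j))"

definition vec_of_components :: "nat \<Rightarrow> nat \<Rightarrow> (nat \<Rightarrow> nat \<Rightarrow> 'a) \<Rightarrow> nat \<Rightarrow> nat \<Rightarrow> 'a" where
  "vec_of_components w m y = (\<lambda>j\<in>{0..<m}. \<lambda>i\<in>{0..<w}. y i j)"

definition pad_vec :: "('a, 'm) ring_scheme \<Rightarrow> nat \<Rightarrow> nat \<Rightarrow> (nat \<Rightarrow> 'a) \<Rightarrow> nat \<Rightarrow> 'a" where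
  "pad_vec S K M u = (\<lambda>k\<in>{0..<M}. if k < K then u k else \<zero>\<^bsub>S\<^esub>)"

lemma proj_code_eq_image: "proj_code n i C = proj_vec n i ` C"
  by (simp add: proj_code_def proj_vec_def)

lemma vecs_prod_ring:
  "vecs (prod_ring Rs w) m = (\<Pi>\<^sub>E j\<in>{0..<m}. \<Pi>\<^sub>E k\<in>{0..<w}. carrier (Rs k))"
  by (simp add: vecs_def prod_ring_def)

lemma proj_vec_in_vecs: "x \<in> vecs (prod_ring Rs w) m \<Longrightarrow> i < w \<Longrightarrow> proj_vec m i x \<in> vecs (Rs i) m"
  unfolding vecs_prod_ring by (auto simp: vecs_def proj_vec_def PiE_iff)

lemma prod_vec_eqI:
  assumes "x \<in> vecs (prod_ring Rs w) m" "y \<in> vecs (prod_ring Rs w) m"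
    and "\<And>i. i < w \<Longrightarrow> proj_vec m i x = proj_vec m i y"
  shows "x = y"
proof (rule PiE_ext[OF assms(1,2)[unfolded vecs_prod_ring]])
  fix j assume j: "j \<in> {0..<m}"
  show "x j = y j"
  proof (rule PiE_ext)
    show "x j \<in> (\<Pi>\<^sub>E k\<in>{0..<w}. carrier (Rs k))" "y j \<in> (\<Pi>\<^sub>E k\<in>{0..<w}. carrier (Rs k))"
      using assms(1,2) j by (auto simp: vecs_prod_ring)
    fix k assume "k \<in> {0..<w}"
    then show "x j k = y j k"
      using fun_cong[OF assms(3), of k j] j by (simp add: proj_vec_def)
  qed
qed

lemma proj_vec_vadd:
  "i < w \<Longrightarrow> proj_vec m i (vadd (prod_ring Rs w) m x y) = vadd (Rs i) m (proj_vec m i x) (proj_vec m i y)"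
  by (auto simp: proj_vec_def vadd_def prod_ring_def)

lemma proj_vec_vsmult:
  "i < w \<Longrightarrow> proj_vec m i (vsmult (prod_ring Rs w) m s x) = vsmult (Rs i) m (s i) (proj_vec m i x)"
  by (auto simp: proj_vec_def vsmult_def prod_ring_def)

lemma proj_embed_vec:
  assumes "a \<in> vecs (Rs i) m" "i < w"
  shows "proj_vec m i (embed_vec Rs w m i a) = a"
proof -
  have "proj_vec m i (embed_vec Rs w m i a) = restrict a {0..<m}"
    unfolding proj_vec_def embed_vec_def prod_single_def by (rule restrict_ext) (use assms(2) in simp)
  then show ?thesis
    using PiE_restrict[OF assms(1)[unfolded vecs_def]] by simp
qed

lemma proj_vec_of_components:
  assumes "y i \<in> vecs (Rs i) m" "i < w"
  shows "proj_vec m i (vec_of_components w m y) = y i"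
proof -
  have "proj_vec m i (vec_of_components w m y) = restrict (y i) {0..<m}"
    unfolding proj_vec_def vec_of_components_def by (rule restrict_ext) (use assms(2) in simp)
  then show ?thesis
    using PiE_restrict[OF assms(1)[unfolded vecs_def]] by simp
qed

lemma vec_of_components_in_vecs:
  assumes "\<And>i. i < w \<Longrightarrow> y i \<in> vecs (Rs i) m"
  shows "vec_of_components w m y \<in> vecs (prod_ring Rs w) m"
proof -
  have "y i j \<in> carrier (Rs i)" if "i < w" "j < m" for i j
    using assms[OF that(1)] that(2) by (auto simp: vecs_def)
  then show ?thesis
    unfolding vecs_prod_ring vec_of_components_def by auto
qed

lemma vec_of_components_cong:
  "(\<And>i. i < w \<Longrightarrow> y i = z i) \<Longrightarrow> vec_of_components w m y = vec_of_components w m z"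
  unfolding vec_of_components_def by (intro restrict_ext) auto

lemma vadd_vec_of_components:
  "vadd (prod_ring Rs w) m (vec_of_components w m y) (vec_of_components w m z) =
     vec_of_components w m (\<lambda>i. vadd (Rs i) m (y i) (z i))"
  by (auto simp: vadd_def vec_of_components_def prod_ring_def intro!: restrict_ext)

lemma vsmult_vec_of_components:
  "vsmult (prod_ring Rs w) m s (vec_of_components w m y) =
     vec_of_components w m (\<lambda>i. vsmult (Rs i) m (s i) (y i))"
  by (auto simp: vsmult_def vec_of_components_def prod_ring_def intro!: restrict_ext)

lemma prod_single_eq_iff:
  assumes "i < w"
  shows "prod_single Rs w i s = prod_single Rs w i t \<longleftrightarrow> s = t"
proof
  assume "prod_single Rs w i s = prod_single Rs w i t"
  from fun_cong[OF this, of i] show "s = t"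
    using assms by (simp add: prod_single_def)
qed simp

lemma hamming_proj_vec_le: "hamming n (proj_vec n i x) (proj_vec n i y) \<le> hamming n x y"
  unfolding hamming_def by (rule card_mono) (auto simp: proj_vec_def)

lemma hamming_embed_vec:
  assumes "i < w"
  shows "hamming n (embed_vec Rs w n i a) (embed_vec Rs w n i b) = hamming n a b"
  unfolding hamming_def embed_vec_def by (intro arg_cong[where f = card]) (auto simp: prod_single_eq_iff[OF assms])

lemma finite_hamming_values: "finite {hamming n x y |x y. x \<in> D \<and> y \<in> D \<and> x \<noteq> y}"
proof (rule finite_subset)
  show "{hamming n x y |x y. x \<in> D \<and> y \<in> D \<and> x \<noteq> y} \<subseteq> {..n}"
    by (auto simp: hamming_def intro: order_trans[OF card_mono[of "{0..<n}"]])
qed simp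

lemma min_dist_le: "x \<in> D \<Longrightarrow> y \<in> D \<Longrightarrow> x \<noteq> y \<Longrightarrow> min_dist n D \<le> hamming n x y"
  unfolding min_dist_def by (rule Min_le[OF finite_hamming_values]) blast

lemma min_dist_attained:
  assumes "x \<in> D" "y \<in> D" "x \<noteq> y"
  obtains a b where "a \<in> D" "b \<in> D" "a \<noteq> b" "min_dist n D = hamming n a b"
proof -
  have "min_dist n D \<in> {hamming n x y |x y. x \<in> D \<and> y \<in> D \<and> x \<noteq> y}"
    unfolding min_dist_def by (rule Min_in[OF finite_hamming_values]) (use assms in blast)
  then show ?thesis using that by blast
qed

lemma module_mono_id: "D \<subseteq> vecs S n \<Longrightarrow> module_mono S n D n id"
  by (auto simp: module_mono_def)

lemma code_rank_mono_exists: "D \<subseteq> vecs S n \<Longrightarrow> \<exists>f. module_mono S n D (code_rank S n D) f"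
  unfolding code_rank_def by (rule LeastI_ex) (use module_mono_id in blast)

lemma code_rank_le: "module_mono S n D K f \<Longrightarrow> code_rank S n D \<le> K"
  unfolding code_rank_def by (rule Least_le) blast

lemma vsmult_one:
  assumes "ring S" "a \<in> vecs S m"
  shows "vsmult S m \<one>\<^bsub>S\<^esub> a = a"
proof -
  have "vsmult S m \<one>\<^bsub>S\<^esub> a = restrict a {0..<m}"
    unfolding vsmult_def using assms by (intro restrict_ext) (auto simp: vecs_def PiE_iff ring.ring_simprules)
  then show ?thesis
    using PiE_restrict[OF assms(2)[unfolded vecs_def]] by simp
qed

lemma pad_vec_in_vecs: "ring S \<Longrightarrow> u \<in> vecs S K \<Longrightarrow> pad_vec S K M u \<in> vecs S M"
  by (auto simp: pad_vec_def vecs_def PiE_iff ring.ring_simprules)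

lemma pad_vec_inj:
  assumes "u \<in> vecs S K" "v \<in> vecs S K" "K \<le> M" "pad_vec S K M u = pad_vec S K M v"
  shows "u = v"
proof (rule PiE_ext[OF assms(1,2)[unfolded vecs_def]])
  fix k assume "k \<in> {0..<K}"
  then show "u k = v k"
    using fun_cong[OF assms(4), of k] assms(3) by (simp add: pad_vec_def)
qed

lemma pad_vec_vadd:
  "ring S \<Longrightarrow> pad_vec S K M (vadd S K u v) = vadd S M (pad_vec S K M u) (pad_vec S K M v)"
  by (auto simp: pad_vec_def vadd_def ring.ring_simprules intro!: restrict_ext)

lemma pad_vec_vsmult:
  "ring S \<Longrightarrow> s \<in> carrier S \<Longrightarrow> pad_vec S K M (vsmult S K s u) = vsmult S M s (pad_vec S K M u)"
  by (auto simp: pad_vec_def vsmult_def ring.ring_simprules intro!: restrict_ext)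

lemma module_mono_pad:
  assumes "ring S" "module_mono S n D K f" "K \<le> M"
  shows "module_mono S n D M (pad_vec S K M \<circ> f)"
proof -
  have f_vecs: "f x \<in> vecs S K" if "x \<in> D" for x
    using assms(2) that by (auto simp: module_mono_def)
  show ?thesis
    unfolding module_mono_def comp_def
  proof (intro conjI ballI)
    show "(\<lambda>x. pad_vec S K M (f x)) \<in> D \<rightarrow> vecs S M"
      using f_vecs pad_vec_in_vecs[OF assms(1)] by blast
    show "inj_on (\<lambda>x. pad_vec S K M (f x)) D"
      using assms(2,3) f_vecs pad_vec_inj unfolding module_mono_def inj_on_def by blast
    fix x y assume "x \<in> D" "y \<in> D"
    then show "pad_vec S K M (f (vadd S n x y)) = vadd S M (pad_vec S K M (f x)) (pad_vec S K M (f y))"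
      using assms(2) pad_vec_vadd[OF assms(1)] by (simp add: module_mono_def)
  next
    fix s x assume "s \<in> carrier S" "x \<in> D"
    then show "pad_vec S K M (f (vsmult S n s x)) = vsmult S M s (pad_vec S K M (f x))"
      using assms(2) pad_vec_vsmult[OF assms(1)] by (simp add: module_mono_def)
  qed
qed

lemma module_mono_of_components:
  assumes C: "C \<subseteq> vecs (prod_ring Rs w) n"
    and fs: "\<And>i. i < w \<Longrightarrow> module_mono (Rs i) n (proj_code n i C) M (fs i)"
  shows "module_mono (prod_ring Rs w) n C M (\<lambda>c. vec_of_components w M (\<lambda>i. fs i (proj_vec n i c)))"
    (is "module_mono _ _ _ _ ?F")
proof -
  have proj_in: "proj_vec n i c \<in> proj_code n i C" if "c \<in> C" for c i
    using that by (simp add: proj_code_eq_image)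
  have fs_vecs: "fs i (proj_vec n i c) \<in> vecs (Rs i) M" if "c \<in> C" "i < w" for c i
    using fs[OF that(2)] proj_in[OF that(1)] by (auto simp: module_mono_def)
  have proj_F: "proj_vec M i (?F c) = fs i (proj_vec n i c)" if "c \<in> C" "i < w" for c i
    using fs_vecs[OF that] that(2) by (rule proj_vec_of_components)
  show ?thesis
    unfolding module_mono_def
  proof (intro conjI ballI)
    show "?F \<in> C \<rightarrow> vecs (prod_ring Rs w) M"
      using fs_vecs by (blast intro: vec_of_components_in_vecs)
    show "inj_on ?F C"
    proof (rule inj_onI)
      fix c c' assume cc': "c \<in> C" "c' \<in> C" "?F c = ?F c'"
      have "proj_vec n i c = proj_vec n i c'" if i: "i < w" for i
      proof -
        have "fs i (proj_vec n i c) = fs i (proj_vec n i c')"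
          using arg_cong[OF cc'(3), of "proj_vec M i"] proj_F cc'(1,2) i by simp
        then show ?thesis
          using fs[OF i] proj_in cc'(1,2) unfolding module_mono_def inj_on_def by blast
      qed
      then show "c = c'"
        using C cc'(1,2) by (blast intro: prod_vec_eqI)
    qed
    fix c c' assume cc': "c \<in> C" "c' \<in> C"
    have "fs i (proj_vec n i (vadd (prod_ring Rs w) n c c')) =
        vadd (Rs i) M (fs i (proj_vec n i c)) (fs i (proj_vec n i c'))" if "i < w" for i
      using fs[OF that] proj_in cc' by (simp add: proj_vec_vadd[OF that] module_mono_def)
    then show "?F (vadd (prod_ring Rs w) n c c') = vadd (prod_ring Rs w) M (?F c) (?F c')"
      unfolding vadd_vec_of_components by (rule vec_of_components_cong)
  next
    fix s c assume sc: "s \<in> carrier (prod_ring Rs w)" "c \<in> C"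
    have "fs i (proj_vec n i (vsmult (prod_ring Rs w) n s c)) =
        vsmult (Rs i) M (s i) (fs i (proj_vec n i c))" if "i < w" for i
    proof -
      have "s i \<in> carrier (Rs i)"
        using sc(1) that by (auto simp: prod_ring_def)
      then show ?thesis
        using fs[OF that] proj_in sc(2) by (simp add: proj_vec_vsmult[OF that] module_mono_def)
    qed
    then show "?F (vsmult (prod_ring Rs w) n s c) = vsmult (prod_ring Rs w) M s (?F c)"
      unfolding vsmult_vec_of_components by (rule vec_of_components_cong)
  qed
qed

context
  fixes Rs :: "nat \<Rightarrow> ('a, 'm) ring_scheme" and w :: nat
  assumes rings: "\<And>i. i < w \<Longrightarrow> ring (Rs i)"
begin

lemma prod_single_carrier:
  "i < w \<Longrightarrow> s \<in> carrier (Rs i) \<Longrightarrow> prod_single Rs w i s \<in> carrier (prod_ring Rs w)"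
  using rings by (auto simp: prod_single_def prod_ring_def ring.ring_simprules)

lemma embed_vec_in_vecs:
  assumes "a \<in> vecs (Rs i) m" "i < w"
  shows "embed_vec Rs w m i a \<in> vecs (prod_ring Rs w) m"
proof -
  have "prod_single Rs w i (a j) \<in> carrier (prod_ring Rs w)" if "j < m" for j
    using assms that by (auto simp: vecs_def intro: prod_single_carrier)
  then show ?thesis
    by (auto simp: embed_vec_def vecs_def)
qed

lemma vsmult_prod_single:
  assumes x: "x \<in> vecs (prod_ring Rs w) m" and i: "i < w" and s: "s \<in> carrier (Rs i)"
  shows "vsmult (prod_ring Rs w) m (prod_single Rs w i s) x =
           embed_vec Rs w m i (vsmult (Rs i) m s (proj_vec m i x))"
proof -
  have "prod_single Rs w i s k \<otimes>\<^bsub>Rs k\<^esub> x j k = (if k = i then s \<otimes>\<^bsub>Rs i\<^esub> x j i else \<zero>\<^bsub>Rs k\<^esub>)"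
    if "j < m" "k < w" for j k
  proof -
    have "x j k \<in> carrier (Rs k)"
      using x that by (auto simp: vecs_prod_ring PiE_iff)
    then show ?thesis
      using rings[OF that(2)] that(2) by (auto simp: prod_single_def ring.ring_simprules)
  qed
  then show ?thesis
    by (auto simp: vsmult_def embed_vec_def prod_single_def prod_ring_def proj_vec_def intro!: restrict_ext)
qed

lemma vsmult_prod_single_one:
  assumes "x \<in> vecs (prod_ring Rs w) m" "i < w"
  shows "vsmult (prod_ring Rs w) m (prod_single Rs w i \<one>\<^bsub>Rs i\<^esub>) x = embed_vec Rs w m i (proj_vec m i x)"
  using assms rings[OF assms(2)]
  by (simp add: vsmult_prod_single vsmult_one proj_vec_in_vecs ring.ring_simprules)

lemma embed_vec_vadd:
  assumes "i < w"
  shows "embed_vec Rs w m i (vadd (Rs i) m a b) =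
           vadd (prod_ring Rs w) m (embed_vec Rs w m i a) (embed_vec Rs w m i b)"
  using rings
  by (auto simp: embed_vec_def vadd_def prod_single_def prod_ring_def ring.ring_simprules intro!: restrict_ext)

lemma embed_vec_vsmult:
  assumes "a \<in> vecs (Rs i) m" "i < w" "s \<in> carrier (Rs i)"
  shows "embed_vec Rs w m i (vsmult (Rs i) m s a) =
           vsmult (prod_ring Rs w) m (prod_single Rs w i s) (embed_vec Rs w m i a)"
  using assms by (simp add: vsmult_prod_single embed_vec_in_vecs proj_embed_vec)

lemma linear_code_proj_code:
  assumes lin: "linear_code (prod_ring Rs w) n C" and i: "i < w"
  shows "linear_code (Rs i) n (proj_code n i C)"
  unfolding linear_code_def proj_code_eq_image
proof (intro conjI ballI)
  show "proj_vec n i ` C \<subseteq> vecs (Rs i) n"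
    using lin i by (auto simp: linear_code_def intro: proj_vec_in_vecs)
  have "proj_vec n i (vzero (prod_ring Rs w) n) = vzero (Rs i) n"
    using i by (auto simp: proj_vec_def vzero_def prod_ring_def)
  then show "vzero (Rs i) n \<in> proj_vec n i ` C"
    using lin by (metis image_eqI linear_code_def)
next
  fix a b assume "a \<in> proj_vec n i ` C" "b \<in> proj_vec n i ` C"
  then obtain c c' where "c \<in> C" "c' \<in> C" "a = proj_vec n i c" "b = proj_vec n i c'"
    by blast
  moreover have "vadd (prod_ring Rs w) n c c' \<in> C"
    using lin \<open>c \<in> C\<close> \<open>c' \<in> C\<close> by (simp add: linear_code_def)
  ultimately show "vadd (Rs i) n a b \<in> proj_vec n i ` C"
    using proj_vec_vadd[OF i] by (metis image_eqI)
next
  fix s a assume s: "s \<in> carrier (Rs i)" and "a \<in> proj_vec n i ` C"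
  then obtain c where c: "c \<in> C" "a = proj_vec n i c"
    by blast
  have "vsmult (prod_ring Rs w) n (prod_single Rs w i s) c \<in> C"
    using lin c(1) prod_single_carrier[OF i s] by (simp add: linear_code_def)
  moreover have "proj_vec n i (vsmult (prod_ring Rs w) n (prod_single Rs w i s) c) = vsmult (Rs i) n s a"
    using i c(2) by (simp add: proj_vec_vsmult prod_single_def)
  ultimately show "vsmult (Rs i) n s a \<in> proj_vec n i ` C"
    by (metis image_eqI)
qed

lemma embed_vec_in_code:
  assumes lin: "linear_code (prod_ring Rs w) n C" and i: "i < w" and a: "a \<in> proj_code n i C"
  shows "embed_vec Rs w n i a \<in> C"
proof -
  obtain c where c: "c \<in> C" "a = proj_vec n i c"
    using a by (auto simp: proj_code_eq_image)
  have "vsmult (prod_ring Rs w) n (prod_single Rs w i \<one>\<^bsub>Rs i\<^esub>) c \<in> C"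
    using lin c(1) prod_single_carrier[OF i] rings[OF i]
    by (simp add: linear_code_def ring.ring_simprules)
  moreover have "c \<in> vecs (prod_ring Rs w) n"
    using lin c(1) by (auto simp: linear_code_def)
  ultimately show ?thesis
    using c(2) i by (simp add: vsmult_prod_single_one)
qed

lemma module_mono_proj_code:
  assumes lin: "linear_code (prod_ring Rs w) n C" and i: "i < w"
    and f: "module_mono (prod_ring Rs w) n C K f"
  shows "module_mono (Rs i) n (proj_code n i C) K (\<lambda>a. proj_vec K i (f (embed_vec Rs w n i a)))"
    (is "module_mono _ _ ?D _ ?g")
proof -
  let ?P = "prod_ring Rs w"
  let ?E = "embed_vec Rs w"
  have a_vecs: "a \<in> vecs (Rs i) n" if "a \<in> ?D" for a
    using linear_code_proj_code[OF lin i] that by (auto simp: linear_code_def)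
  have E_in: "?E n i a \<in> C" if "a \<in> ?D" for a
    using embed_vec_in_code[OF lin i that] .
  have f_vecs: "f (?E n i a) \<in> vecs ?P K" if "a \<in> ?D" for a
    using f E_in[OF that] by (auto simp: module_mono_def)
  have one: "\<one>\<^bsub>Rs i\<^esub> \<in> carrier (Rs i)"
    using rings[OF i] by (simp add: ring.ring_simprules)
  \<comment> \<open>multiplication by the idempotent of the i-th factor fixes embedded vectors and commutes with f\<close>
  have f_E: "f (?E n i a) = ?E K i (?g a)" if "a \<in> ?D" for a
  proof -
    have "?E n i a = vsmult ?P n (prod_single Rs w i \<one>\<^bsub>Rs i\<^esub>) (?E n i a)"
      using a_vecs[OF that] i by (simp add: vsmult_prod_single_one embed_vec_in_vecs proj_embed_vec)
    then have "f (?E n i a) = vsmult ?P K (prod_single Rs w i \<one>\<^bsub>Rs i\<^esub>) (f (?E n i a))"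
      using f E_in[OF that] prod_single_carrier[OF i one] unfolding module_mono_def by metis
    then show ?thesis
      using vsmult_prod_single_one[OF f_vecs[OF that] i] by simp
  qed
  show ?thesis
    unfolding module_mono_def
  proof (intro conjI ballI)
    show "?g \<in> ?D \<rightarrow> vecs (Rs i) K"
      using f_vecs proj_vec_in_vecs i by blast
    show "inj_on ?g ?D"
    proof (rule inj_onI)
      fix a b assume ab: "a \<in> ?D" "b \<in> ?D" "?g a = ?g b"
      then have "?E n i a = ?E n i b"
        using f f_E E_in unfolding module_mono_def inj_on_def by metis
      then show "a = b"
        using proj_embed_vec a_vecs ab(1,2) i by metis
    qed
    fix a b assume ab: "a \<in> ?D" "b \<in> ?D"
    have "f (?E n i (vadd (Rs i) n a b)) = vadd ?P K (f (?E n i a)) (f (?E n i b))"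
      using f E_in ab unfolding embed_vec_vadd[OF i] module_mono_def by blast
    then show "?g (vadd (Rs i) n a b) = vadd (Rs i) K (?g a) (?g b)"
      using proj_vec_vadd[OF i] by metis
  next
    fix s a assume s: "s \<in> carrier (Rs i)" and a: "a \<in> ?D"
    have "f (?E n i (vsmult (Rs i) n s a)) = vsmult ?P K (prod_single Rs w i s) (f (?E n i a))"
      using f E_in[OF a] prod_single_carrier[OF i s]
      unfolding embed_vec_vsmult[OF a_vecs[OF a] i s] module_mono_def by blast
    then show "?g (vsmult (Rs i) n s a) = vsmult (Rs i) K s (?g a)"
      using i by (simp add: proj_vec_vsmult prod_single_def)
  qed
qed

lemma code_rank_prod_ring:
  assumes lin: "linear_code (prod_ring Rs w) n C" and w: "0 < w"
  shows "code_rank (prod_ring Rs w) n C = Max ((\<lambda>i. code_rank (Rs i) n (proj_code n i C)) ` {0..<w})"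
    (is "?rank = Max (?K ` _)")
proof (rule antisym)
  have C: "C \<subseteq> vecs (prod_ring Rs w) n"
    using lin by (simp add: linear_code_def)
  have C_i: "proj_code n i C \<subseteq> vecs (Rs i) n" if "i < w" for i
    using linear_code_proj_code[OF lin that] by (simp add: linear_code_def)
  have K_le_Max: "?K i \<le> Max (?K ` {0..<w})" if "i < w" for i
    using that by (intro Max_ge) auto
  have "\<exists>f. module_mono (Rs i) n (proj_code n i C) (Max (?K ` {0..<w})) f" if "i < w" for i
    using code_rank_mono_exists[OF C_i[OF that]] module_mono_pad[OF rings[OF that] _ K_le_Max[OF that]]
    by blast
  then obtain fs where "\<And>i. i < w \<Longrightarrow> module_mono (Rs i) n (proj_code n i C) (Max (?K ` {0..<w})) (fs i)"
    by metis
  then show "?rank \<le> Max (?K ` {0..<w})"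
    using code_rank_le module_mono_of_components[OF C] by blast
  obtain f where "module_mono (prod_ring Rs w) n C ?rank f"
    using code_rank_mono_exists[OF C] by blast
  then show "Max (?K ` {0..<w}) \<le> ?rank"
    using w by (auto intro!: Max.boundedI code_rank_le[OF module_mono_proj_code[OF lin]])
qed

lemma min_dist_prod_ring:
  assumes lin: "linear_code (prod_ring Rs w) n C" and w: "0 < w"
    and nontrivial: "\<And>i. i < w \<Longrightarrow> proj_code n i C \<noteq> {vzero (Rs i) n}"
  shows "min_dist n C = Min ((\<lambda>i. min_dist n (proj_code n i C)) ` {0..<w})"
    (is "?d = Min (?d_i ` _)")
proof (rule antisym)
  have C: "C \<subseteq> vecs (prod_ring Rs w) n"
    using lin by (simp add: linear_code_def)
  have embedded_pair: "\<exists>a b. embed_vec Rs w n i a \<in> C \<and> embed_vec Rs w n i b \<in> C \<and>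
      embed_vec Rs w n i a \<noteq> embed_vec Rs w n i b \<and> ?d_i i = hamming n a b" if i: "i < w" for i
  proof -
    have zero: "vzero (Rs i) n \<in> proj_code n i C" and C_i: "proj_code n i C \<subseteq> vecs (Rs i) n"
      using linear_code_proj_code[OF lin i] by (auto simp: linear_code_def)
    obtain c where c: "c \<in> proj_code n i C" "c \<noteq> vzero (Rs i) n"
      using nontrivial[OF i] zero by blast
    obtain a b where ab: "a \<in> proj_code n i C" "b \<in> proj_code n i C" "a \<noteq> b"
        "?d_i i = hamming n a b"
      by (rule min_dist_attained[OF c(1) zero c(2)])
    have "embed_vec Rs w n i a \<noteq> embed_vec Rs w n i b"
      using ab(1-3) C_i proj_embed_vec[OF _ i] by (metis subsetD)
    then show ?thesis
      using ab embed_vec_in_code[OF lin i] by blast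
  qed
  have "?d \<le> ?d_i i" if i: "i < w" for i
  proof -
    obtain a b where "embed_vec Rs w n i a \<in> C" "embed_vec Rs w n i b \<in> C"
        "embed_vec Rs w n i a \<noteq> embed_vec Rs w n i b" "?d_i i = hamming n a b"
      using embedded_pair[OF i] by blast
    then show ?thesis
      using min_dist_le hamming_embed_vec[OF i] by metis
  qed
  then show "?d \<le> Min (?d_i ` {0..<w})"
    using w by (auto intro: Min.boundedI)
  obtain a b where "embed_vec Rs w n 0 a \<in> C" "embed_vec Rs w n 0 b \<in> C"
      "embed_vec Rs w n 0 a \<noteq> embed_vec Rs w n 0 b"
    using embedded_pair[OF w] by blast
  then obtain x y where xy: "x \<in> C" "y \<in> C" "x \<noteq> y" "?d = hamming n x y"
    by (rule min_dist_attained)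
  then obtain i where i: "i < w" "proj_vec n i x \<noteq> proj_vec n i y"
    using C prod_vec_eqI by blast
  have "Min (?d_i ` {0..<w}) \<le> ?d_i i"
    using i(1) by (intro Min_le) auto
  also have "\<dots> \<le> hamming n (proj_vec n i x) (proj_vec n i y)"
    using xy(1,2) i(2) by (intro min_dist_le) (auto simp: proj_code_eq_image)
  also have "\<dots> \<le> ?d"
    using xy(4) hamming_proj_vec_le by simp
  finally show "Min (?d_i ` {0..<w}) \<le> ?d" .
qed

end

lemma lrc_bound_antimono:
  assumes "K \<le> K'"
  shows "int n - int K' - \<lceil>real K' / real r\<rceil> + 2 \<le> int n - int K - \<lceil>real K / real r\<rceil> + 2"
proof -
  have "\<lceil>real K / real r\<rceil> \<le> \<lceil>real K' / real r\<rceil>"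
    using assms by (intro ceiling_mono divide_right_mono) auto
  then show ?thesis
    using assms by linarith
qed

theorem mainTheorem5:
  fixes Rs :: "nat \<Rightarrow> 'a ring" and w n r :: nat
    and C :: "(nat \<Rightarrow> nat \<Rightarrow> 'a) set"
  assumes "w \<ge> 1"
    and "\<And>i. i < w \<Longrightarrow> finite_chain_ring (Rs i)"
    and "linear_code (prod_ring Rs w) n C"
    and "\<And>i. i < w \<Longrightarrow> proj_code n i C \<noteq> {vzero (Rs i) n}"
    and "r \<ge> 1"
    and "\<And>i. i < w \<Longrightarrow> has_locality n (proj_code n i C) r"
    and "\<And>i. i < w \<Longrightarrow>
       int (min_dist n (proj_code n i C)) =
         int n - int (code_rank (Rs i) n (proj_code n i C))
         - \<lceil>real (code_rank (Rs i) n (proj_code n i C)) / real r\<rceil> + 2"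
  shows "int (min_dist n C) =
           int n - int (code_rank (prod_ring Rs w) n C)
           - \<lceil>real (code_rank (prod_ring Rs w) n C) / real r\<rceil> + 2"
proof -
  let ?K = "\<lambda>i. code_rank (Rs i) n (proj_code n i C)"
  let ?d = "\<lambda>i. min_dist n (proj_code n i C)"
  have rings: "\<And>i. i < w \<Longrightarrow> ring (Rs i)"
    using assms(2) by (auto simp: finite_chain_ring_def cring_def)
  have w: "0 < w"
    using assms(1) by simp
  have "Max (?K ` {0..<w}) \<in> ?K ` {0..<w}"
    using w by (intro Max_in) auto
  then obtain i0 where i0: "i0 < w" "?K i0 = Max (?K ` {0..<w})"
    by auto
  have "?d i0 \<le> ?d i" if "i < w" for i
    using lrc_bound_antimono[of "?K i" "?K i0" n r] assms(7)[OF that] assms(7)[OF i0(1)] i0 that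
    by (simp add: Max_ge)
  then have "Min (?d ` {0..<w}) = ?d i0"
    using i0(1) by (intro Min_eqI) auto
  then show ?thesis
    using min_dist_prod_ring[OF rings assms(3) w assms(4)] code_rank_prod_ring[OF rings assms(3) w]
      i0(2) assms(7)[OF i0(1)] by simp
qed

end
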